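(* Let $1\le N<L$, $m\ge1$, integers $k_\ell,a_\ell$ and reals $t_\ell\ge0$, and nonzero complex $z_1,\dots,z_m$ with $0<|z_m|<\cdots<|z_1|$. Then $$\sum_{Y\in\mathcal Y_N(L)}\mathcal D_Y(\mathbf z;\mathbf k)=\mathcal D_{\rm step}(\mathbf z;\mathbf k^+)-(-1)^{N-1}z_1^{-L}\mathcal D_{\rm step}(\mathbf z;\mathbf k),$$ where $\mathbf k=(k_1,\dots,k_m)$, $\mathbf k^+=(k_1+1,\dots,k_m+1)$, and $\mathcal D_{\rm step}$ is $\mathcal D_Y$ for $Y=(-N+1,\dots,-1,0)$.
   Context: $\mathcal Y_N(L)=\{(y_1,\dots,y_N)\in\mathbb Z^N:-L+1\le y_1<\cdots<y_N\le0\}$; $\rho=N/L$. Let $\mathcal S_z$ be the set of roots of $w^N(w+1)^{L-N}=z^L$. With $k_0=a_0=t_0=0$, $\mathrm G_\ell(w)=\frac{w(w+1)}{L(w+\rho)}\frac{w^{-k_\ell}(w+1)^{-a_\ell+k_\ell}e^{t_\ell w}}{w^{-k_{\ell-1}}(w+1)^{-a_{\ell-1}+k_{\ell-1}}e^{t_{\ell-1}w}}$, and $$\mathcal D_Y(\mathbf z;\mathbf k)=\det\Big[\sum_{w_1\in\mathcal S_{z_1},\dots,w_m\in\mathcal S_{z_m}}\frac{w_1^i(w_1+1)^{y_i-i}w_m^{-j}}{\prod_{\ell=2}^m(w_\ell-w_{\ell-1})}\prod_{\ell=1}^m\mathrm G_\ell(w_\ell)\Big]_{i,j=1}^N.$$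 *)

theory Defs
  imports "HOL-Analysis.Analysis" "HOL-Library.FuncSet" "Jordan_Normal_Form.Determinant"
begin

definition YN :: "nat \<Rightarrow> nat \<Rightarrow> int list set" where
  "YN N L = {ys. length ys = N \<and> sorted_wrt (<) ys \<and>
                 (\<forall>y\<in>set ys. - int L + 1 \<le> y \<and> y \<le> 0)}"

definition Ystep :: "nat \<Rightarrow> int list" where
  "Ystep N = map (\<lambda>i. int i - int N) [1..<N+1]"

definition Sroots :: "nat \<Rightarrow> nat \<Rightarrow> complex \<Rightarrow> complex set" where
  "Sroots N L z = {w. w ^ N * (w + 1) ^ (L - N) = z ^ L}"

text \<open>Convention k_0 = a_0 = t_0 = 0: sequences indexed by 1..m, extended by 0 at index 0.\<close>
definition ext0 :: "(nat \<Rightarrow> 'a::zero) \<Rightarrow> nat \<Rightarrow> 'a" where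
  "ext0 f l = (if l = 0 then 0 else f l)"

definition Gfun :: "nat \<Rightarrow> nat \<Rightarrow> (nat \<Rightarrow> int) \<Rightarrow> (nat \<Rightarrow> int) \<Rightarrow> (nat \<Rightarrow> real)
                    \<Rightarrow> nat \<Rightarrow> complex \<Rightarrow> complex" where
  "Gfun N L k a t l w =
     (let \<rho> = of_nat N / of_nat L :: complex;
          kk = ext0 k; aa = ext0 a; tt = ext0 t
      in w * (w + 1) / (of_nat L * (w + \<rho>)) *
         (w powi (- kk l) * (w + 1) powi (- aa l + kk l) * exp (complex_of_real (tt l) * w)) /
         (w powi (- kk (l - 1)) * (w + 1) powi (- aa (l - 1) + kk (l - 1))
            * exp (complex_of_real (tt (l - 1)) * w)))"

definition DY :: "nat \<Rightarrow> nat \<Rightarrow> nat \<Rightarrow> (nat \<Rightarrow> complex) \<Rightarrow> (nat \<Rightarrow> int) \<Rightarrow> (nat \<Rightarrow> int)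
                  \<Rightarrow> (nat \<Rightarrow> real) \<Rightarrow> int list \<Rightarrow> complex" where
  "DY N L m z k a t Y =
     det (mat N N (\<lambda>(i0, j0).
       let i = i0 + 1; j = j0 + 1 in
       (\<Sum>w\<in>(\<Pi>\<^sub>E l\<in>{1..m}. Sroots N L (z l)).
          w 1 ^ i * (w 1 + 1) powi (Y ! (i - 1) - int i) * w m powi (- int j)
          / (\<Prod>l\<in>{2..m}. w l - w (l - 1))
          * (\<Prod>l\<in>{1..m}. Gfun N L k a t l (w l)))))"

end

theory Submission
  imports Defs
begin

text \<open>
  Write R_i(y) for the row j \<mapsto> \<Sum>(over root tuples w) w_1^i (w_1+1)^(y-i) w_m^(-j-1)
  \<Prod>G_l(w_l) / \<Prod>(w_l - w_(l-1)), so that the i-th row of D_Y is R_i(y_i). Since (w+1)^(y-i) = (w+1)^(y-1-i) (w+1), these rows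
  satisfy the Pascal rule R_i(y) = R_i(y-1) + R_(i+1)(y). Summing det[R_i(y_i)] over
  y_1 < \<dots> < y_N one coordinate at a time, every sum telescopes and the leftover terms are removed
  by adjacent row operations, which leaves det[R_0(1-N) - R_0(-L), R_1(2-N), \<dots>, R_(N-1)(0)].
  Raising every k_l by one multiplies G_1 by (w_1+1)/w_1, i.e. lowers the row index by one, so the
  first part is D_step(z; k+). On the roots (w_1+1)^(-L) = z_1^(-L) w_1^N (w_1+1)^(-N), so
  R_0(-L) = z_1^(-L) R_N(0); moving that row to the bottom costs (-1)^(N-1), and the Pascal rule,
  applied from the bottom row up, turns the remaining rows into those of D_step(z; k).
\<close>

section \<open>Determinants of lists of rows\<close>

definition det_rows :: "(nat \<Rightarrow> 'a :: comm_ring_1) list \<Rightarrow> 'a" where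
  "det_rows rs = det (mat (length rs) (length rs) (\<lambda>(i, j). (rs ! i) j))"

lemma det_rows_linear_in_row:
  fixes P S :: "(nat \<Rightarrow> 'a :: comm_ring_1) list"
  obtains C where "\<And>r. det_rows (P @ r # S) =
    (\<Sum>p\<in>{p. p permutes {0..<Suc (length P + length S)}}. r (p (length P)) * C p)"
proof -
  let ?n = "Suc (length P + length S)"
  define C where "C p = signof p * (\<Prod>i\<in>{0..<?n} - {length P}. ((P @ (\<lambda>_. 0) # S) ! i) (p i))"
    for p
  have "det_rows (P @ r # S) = (\<Sum>p\<in>{p. p permutes {0..<?n}}. r (p (length P)) * C p)" for r
  proof -
    have "det_rows (P @ r # S)
        = (\<Sum>p\<in>{p. p permutes {0..<?n}}. signof p * (\<Prod>i = 0..<?n. ((P @ r # S) ! i) (p i)))"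
      unfolding det_rows_def
      by (subst det_def'[where n = ?n]) (auto intro!: sum.cong prod.cong simp: permutes_in_image)
    also have "\<dots> = (\<Sum>p\<in>{p. p permutes {0..<?n}}. r (p (length P)) * C p)"
    proof (rule sum.cong[OF refl])
      fix p
      have "(\<Prod>i = 0..<?n. ((P @ r # S) ! i) (p i))
          = r (p (length P)) * (\<Prod>i\<in>{0..<?n} - {length P}. ((P @ r # S) ! i) (p i))"
        by (subst prod.remove[of _ "length P"]) auto
      also have "(\<Prod>i\<in>{0..<?n} - {length P}. ((P @ r # S) ! i) (p i))
          = (\<Prod>i\<in>{0..<?n} - {length P}. ((P @ (\<lambda>_. 0) # S) ! i) (p i))"
        by (intro prod.cong) (auto simp: nth_append split: nat.split)
      finally show "signof p * (\<Prod>i = 0..<?n. ((P @ r # S) ! i) (p i)) = r (p (length P)) * C p"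
        by (simp add: C_def ac_simps)
    qed
    finally show ?thesis .
  qed
  then show thesis by (rule that)
qed

lemma det_rows_row_linear:
  shows det_rows_add_row:
      "det_rows (P @ (\<lambda>j. a j + b j) # S) = det_rows (P @ a # S) + det_rows (P @ b # S)"
    and det_rows_diff_row:
      "det_rows (P @ (\<lambda>j. a j - b j) # S) = det_rows (P @ a # S) - det_rows (P @ b # S)"
    and det_rows_scale_row:
      "det_rows (P @ (\<lambda>j. c * a j) # S) = c * det_rows (P @ a # S)"
    and det_rows_sum_row:
      "det_rows (P @ (\<lambda>j. \<Sum>x\<in>A. f x j) # S) = (\<Sum>x\<in>A. det_rows (P @ f x # S))"
proof -
  obtain C where C: "\<And>r. det_rows (P @ r # S) =
      (\<Sum>p\<in>{p. p permutes {0..<Suc (length P + length S)}}. r (p (length P)) * C p)"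
    using det_rows_linear_in_row[of P S] by blast
  show "det_rows (P @ (\<lambda>j. a j + b j) # S) = det_rows (P @ a # S) + det_rows (P @ b # S)"
    by (simp add: C distrib_right sum.distrib)
  show "det_rows (P @ (\<lambda>j. a j - b j) # S) = det_rows (P @ a # S) - det_rows (P @ b # S)"
    by (simp add: C left_diff_distrib sum_subtractf)
  show "det_rows (P @ (\<lambda>j. c * a j) # S) = c * det_rows (P @ a # S)"
    by (simp add: C sum_distrib_left mult.assoc)
  show "det_rows (P @ (\<lambda>j. \<Sum>x\<in>A. f x j) # S) = (\<Sum>x\<in>A. det_rows (P @ f x # S))"
    by (simp add: C sum_distrib_right sum.swap[of _ A])
qed

lemma det_rows_equal_adjacent: "det_rows (P @ a # a # S) = 0"
  unfolding det_rows_def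
  by (rule det_identical_rows[of _ _ "length P" "Suc (length P)"]) (auto simp: nth_append)

lemma det_rows_swap_adjacent: "det_rows (P @ a # b # S) = - det_rows (P @ b # a # S)"
proof -
  have "0 = det_rows (P @ (\<lambda>j. a j + b j) # (\<lambda>j. a j + b j) # S)"
    by (rule det_rows_equal_adjacent[symmetric])
  also have "\<dots> = det_rows (P @ a # a # S) + det_rows (P @ a # b # S)
      + det_rows (P @ b # a # S) + det_rows (P @ b # b # S)"
    using det_rows_add_row[of P _ _ "_ # S"] det_rows_add_row[of "P @ [_]"] by simp
  finally show ?thesis
    by (simp add: det_rows_equal_adjacent eq_neg_iff_add_eq_0 add.commute)
qed

lemma det_rows_add_next_row: "det_rows (P @ (\<lambda>j. a j + b j) # b # S) = det_rows (P @ a # b # S)"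
  using det_rows_add_row[of P a b "b # S"] det_rows_equal_adjacent[of P b S] by simp

lemma det_rows_diff_prev_row: "det_rows (P @ a # (\<lambda>j. b j - a j) # S) = det_rows (P @ a # b # S)"
  using det_rows_diff_row[of "P @ [a]" b a S] det_rows_equal_adjacent[of P a S] by simp

lemma det_rows_move_row: "det_rows (P @ a # Q @ S) = (-1) ^ length Q * det_rows (P @ Q @ a # S)"
proof (induction Q arbitrary: P)
  case Nil
  then show ?case by simp
next
  case (Cons q Q)
  have "det_rows (P @ a # q # Q @ S) = - det_rows ((P @ [q]) @ a # Q @ S)"
    using det_rows_swap_adjacent by simp
  also have "\<dots> = - ((-1) ^ length Q * det_rows ((P @ [q]) @ Q @ a # S))"
    by (simp only: Cons.IH)
  finally show ?case by simp
qed

section \<open>Strictly increasing integer sequences\<close>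

definition strict_seqs :: "nat \<Rightarrow> int \<Rightarrow> int \<Rightarrow> int list set" where
  "strict_seqs n lo hi = {ys. length ys = n \<and> sorted_wrt (<) ys \<and> set ys \<subseteq> {lo..hi}}"

lemma finite_strict_seqs: "finite (strict_seqs n lo hi)"
proof (rule finite_subset)
  show "strict_seqs n lo hi \<subseteq> {ys. set ys \<subseteq> {lo..hi} \<and> length ys = n}"
    unfolding strict_seqs_def by auto
qed (simp add: finite_lists_length_eq)

lemma strict_seqs_0 [simp]: "strict_seqs 0 lo hi = {[]}"
  unfolding strict_seqs_def by auto

lemma Cons_in_strict_seqs_iff:
  "y # ys \<in> strict_seqs (Suc n) lo hi \<longleftrightarrow> y \<in> {lo..hi} \<and> ys \<in> strict_seqs n (y + 1) hi"
  unfolding strict_seqs_def by fastforce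

lemma strict_seqs_head_bound: "y # ys \<in> strict_seqs (Suc n) lo hi \<Longrightarrow> y + int n \<le> hi"
proof (induction n arbitrary: y ys lo)
  case 0
  then show ?case by (simp add: Cons_in_strict_seqs_iff)
next
  case (Suc n)
  then have y: "y \<in> {lo..hi}" and ys: "ys \<in> strict_seqs (Suc n) (y + 1) hi"
    by (simp_all add: Cons_in_strict_seqs_iff)
  then obtain y' ys' where "ys = y' # ys'"
    by (cases ys) (auto simp: strict_seqs_def)
  with ys have "y + 1 \<le> y'" and "y' + int n \<le> hi"
    by (auto simp: Cons_in_strict_seqs_iff intro: Suc.IH)
  then show ?case by simp
qed

lemma strict_seqs_Suc:
  "strict_seqs (Suc n) lo hi = (\<lambda>(y, ys). y # ys) ` (SIGMA y:{lo..hi - int n}. strict_seqs n (y + 1) hi)"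
proof (intro equalityI subsetI)
  fix xs assume xs: "xs \<in> strict_seqs (Suc n) lo hi"
  then obtain y ys where "xs = y # ys"
    by (cases xs) (auto simp: strict_seqs_def)
  with xs strict_seqs_head_bound[of y ys n lo hi]
  show "xs \<in> (\<lambda>(y, ys). y # ys) ` (SIGMA y:{lo..hi - int n}. strict_seqs n (y + 1) hi)"
    by (auto simp: Cons_in_strict_seqs_iff)
qed (auto simp: Cons_in_strict_seqs_iff)

lemma sum_strict_seqs_Suc:
  "(\<Sum>ys\<in>strict_seqs (Suc n) lo hi. f ys)
     = (\<Sum>y\<in>{lo..hi - int n}. \<Sum>ys\<in>strict_seqs n (y + 1) hi. f (y # ys))"
  unfolding strict_seqs_Suc
  by (subst sum.reindex) (auto simp: inj_on_def sum.Sigma finite_strict_seqs split_def)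

section \<open>Row lists and the Pascal rule\<close>

fun seq_rows :: "(nat \<Rightarrow> int \<Rightarrow> 'r) \<Rightarrow> nat \<Rightarrow> int list \<Rightarrow> 'r list" where
  "seq_rows R i [] = []"
| "seq_rows R i (y # ys) = R i y # seq_rows R (Suc i) ys"

fun diag_rows :: "(nat \<Rightarrow> int \<Rightarrow> 'r) \<Rightarrow> nat \<Rightarrow> int \<Rightarrow> nat \<Rightarrow> 'r list" where
  "diag_rows R i c 0 = []"
| "diag_rows R i c (Suc n) = R i c # diag_rows R (Suc i) (c + 1) n"

lemma length_seq_rows [simp]: "length (seq_rows R i ys) = length ys"
  by (induction ys arbitrary: i) auto

lemma length_diag_rows [simp]: "length (diag_rows R i c n) = n"
  by (induction n arbitrary: i c) auto

lemma nth_seq_rows: "q < length ys \<Longrightarrow> seq_rows R i ys ! q = R (i + q) (ys ! q)"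
  by (induction ys arbitrary: i q) (auto simp: nth_Cons split: nat.split)

lemma nth_diag_rows: "q < n \<Longrightarrow> diag_rows R i c n ! q = R (i + q) (c + int q)"
  by (induction n arbitrary: i c q) (auto simp: nth_Cons algebra_simps split: nat.split)

lemma diag_rows_snoc: "diag_rows R i c (Suc n) = diag_rows R i c n @ [R (i + n) (c + int n)]"
proof (induction n arbitrary: i c)
  case (Suc n)
  have "diag_rows R i c (Suc (Suc n)) = R i c # diag_rows R (Suc i) (c + 1) (Suc n)"
    by (simp only: diag_rows.simps)
  also have "\<dots> = R i c # diag_rows R (Suc i) (c + 1) n @ [R (Suc i + n) (c + 1 + int n)]"
    by (simp only: Suc.IH)
  finally show ?case by (simp add: ac_simps)
qed simp

lemma diag_rows_Suc_index: "diag_rows R (Suc i) c n = diag_rows (\<lambda>i. R (Suc i)) i c n"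
  by (induction n arbitrary: i c) auto

locale pascal_rows =
  fixes R :: "nat \<Rightarrow> int \<Rightarrow> nat \<Rightarrow> 'a :: comm_ring_1"
  assumes pascal: "R i y j = R i (y - 1) j + R (Suc i) y j"
begin

lemma sum_pascal_telescope: "lo - 1 \<le> c \<Longrightarrow> (\<Sum>y\<in>{lo..c}. R (Suc i) y j) = R i c j - R i (lo - 1) j"
proof (induction c rule: int_ge_induct)
  case (step c)
  have "{lo..c + 1} = insert (c + 1) {lo..c}"
    using step.hyps by auto
  then show ?case
    using step.IH pascal[of i "c + 1" j] by simp
qed simp

lemma sum_det_append_seq_rows:
  assumes "lo \<le> c + 1"
  shows "(\<Sum>ys\<in>strict_seqs (Suc n) lo (c + int n). det_rows (P @ seq_rows R (Suc i) ys))
     = det_rows (P @ (\<lambda>j. R i c j - R i (lo - 1) j) # diag_rows R (Suc i) (c + 1) n)"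
  using assms
proof (induction n arbitrary: P i lo c)
  case 0
  then show ?case
    by (simp add: sum_strict_seqs_Suc det_rows_sum_row[of P _ _ "[]", symmetric] sum_pascal_telescope)
next
  case (Suc n)
  have inner: "(\<Sum>ys\<in>strict_seqs (Suc n) (y + 1) (c + int (Suc n)).
        det_rows (P @ seq_rows R (Suc i) (y # ys)))
      = det_rows (P @ R (Suc i) y # diag_rows R (Suc i) (c + 1) (Suc n))"
    if "y \<in> {lo..c}" for y
  proof -
    have "(\<Sum>ys\<in>strict_seqs (Suc n) (y + 1) (c + int (Suc n)).
          det_rows (P @ seq_rows R (Suc i) (y # ys)))
        = det_rows ((P @ [R (Suc i) y]) @ (\<lambda>j. R (Suc i) (c + 1) j - R (Suc i) y j)
            # diag_rows R (Suc (Suc i)) (c + 1 + 1) n)"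
      using Suc.IH[of "y + 1" "c + 1" "P @ [R (Suc i) y]" "Suc i"] that by (simp add: ac_simps)
    also have "\<dots> = det_rows (P @ R (Suc i) y # diag_rows R (Suc i) (c + 1) (Suc n))"
      using det_rows_diff_prev_row by simp
    finally show ?thesis .
  qed
  have "(\<Sum>ys\<in>strict_seqs (Suc (Suc n)) lo (c + int (Suc n)). det_rows (P @ seq_rows R (Suc i) ys))
      = (\<Sum>y\<in>{lo..c}. det_rows (P @ R (Suc i) y # diag_rows R (Suc i) (c + 1) (Suc n)))"
    unfolding sum_strict_seqs_Suc[where n = "Suc n"] by (intro sum.cong inner) auto
  also have "\<dots> = det_rows (P @ (\<lambda>j. \<Sum>y\<in>{lo..c}. R (Suc i) y j) # diag_rows R (Suc i) (c + 1) (Suc n))"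
    by (rule det_rows_sum_row[symmetric])
  also have "\<dots> = det_rows (P @ (\<lambda>j. R i c j - R i (lo - 1) j) # diag_rows R (Suc i) (c + 1) (Suc n))"
    using Suc.prems by (simp add: sum_pascal_telescope)
  finally show ?case .
qed

lemma det_diag_rows_shift:
  "det_rows (P @ diag_rows R i (c + 1) n @ [R (i + n) (c + int n)]) = det_rows (P @ diag_rows R i c (Suc n))"
proof (induction n arbitrary: P i c)
  case 0
  then show ?case by simp
next
  case (Suc n)
  have first_row: "R i (c + 1) = (\<lambda>j. R i c j + R (Suc i) (c + 1) j)"
    using pascal[of i "c + 1"] by (simp add: fun_eq_iff)
  have "det_rows (P @ diag_rows R i (c + 1) (Suc n) @ [R (i + Suc n) (c + int (Suc n))])
      = det_rows ((P @ [R i (c + 1)]) @ diag_rows R (Suc i) (c + 1 + 1) n @ [R (Suc i + n) (c + 1 + int n)])"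
    by (simp add: ac_simps)
  also have "\<dots> = det_rows ((P @ [R i (c + 1)]) @ diag_rows R (Suc i) (c + 1) (Suc n))"
    by (rule Suc.IH)
  also have "\<dots> = det_rows (P @ (\<lambda>j. R i c j + R (Suc i) (c + 1) j) # R (Suc i) (c + 1)
      # diag_rows R (Suc (Suc i)) (c + 1 + 1) n)"
    by (simp add: first_row)
  also have "\<dots> = det_rows (P @ diag_rows R i c (Suc (Suc n)))"
    by (simp add: det_rows_add_next_row)
  finally show ?case .
qed

theorem sum_det_seq_rows:
  assumes "lo \<le> hi - int n + 1" and wrap: "\<And>j. R 0 (lo - 1) j = q * R (Suc n) hi j"
  shows "(\<Sum>ys\<in>strict_seqs (Suc n) lo hi. det_rows (seq_rows R 1 ys))
    = det_rows (diag_rows R 0 (hi - int n) (Suc n))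
      - (-1) ^ n * q * det_rows (diag_rows R 1 (hi - int n) (Suc n))"
proof -
  define c where "c = hi - int n"
  have "(\<Sum>ys\<in>strict_seqs (Suc n) lo hi. det_rows (seq_rows R 1 ys))
      = det_rows ((\<lambda>j. R 0 c j - R 0 (lo - 1) j) # diag_rows R 1 (c + 1) n)"
    using sum_det_append_seq_rows[where lo = lo and c = c and n = n and P = "[]" and i = 0] assms(1)
    by (simp add: c_def)
  also have "\<dots> = det_rows (diag_rows R 0 c (Suc n)) - det_rows (R 0 (lo - 1) # diag_rows R 1 (c + 1) n)"
    using det_rows_diff_row[of "[]"] by simp
  also have "det_rows (R 0 (lo - 1) # diag_rows R 1 (c + 1) n)
      = q * det_rows (R (Suc n) hi # diag_rows R 1 (c + 1) n)"
  proof -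
    have "R 0 (lo - 1) = (\<lambda>j. q * R (Suc n) hi j)"
      using wrap by (simp add: fun_eq_iff)
    then show ?thesis
      using det_rows_scale_row[of "[]" q] by simp
  qed
  also have "det_rows (R (Suc n) hi # diag_rows R 1 (c + 1) n)
      = (-1) ^ n * det_rows (diag_rows R 1 (c + 1) n @ [R (1 + n) (c + int n)])"
    using det_rows_move_row[of "[]" "R (Suc n) hi" "diag_rows R 1 (c + 1) n" "[]"] by (simp add: c_def)
  also have "\<dots> = (-1) ^ n * det_rows (diag_rows R 1 c (Suc n))"
    using det_diag_rows_shift[where P = "[]" and i = 1 and c = c and n = n] by simp
  finally show ?thesis by (simp add: c_def)
qed

end

section \<open>The rows of D_Y\<close>

lemma seq_rows_Ystep: "seq_rows R i (Ystep N) = diag_rows R i (1 - int N) N"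
  by (rule nth_equalityI)
    (auto simp: nth_seq_rows nth_diag_rows Ystep_def algebra_simps simp del: upt_Suc)

lemma length_Ystep [simp]: "length (Ystep N) = N"
  by (simp add: Ystep_def)

definition DY_row :: "nat \<Rightarrow> nat \<Rightarrow> nat \<Rightarrow> (nat \<Rightarrow> complex) \<Rightarrow> (nat \<Rightarrow> int) \<Rightarrow> (nat \<Rightarrow> int)
    \<Rightarrow> (nat \<Rightarrow> real) \<Rightarrow> nat \<Rightarrow> int \<Rightarrow> nat \<Rightarrow> complex" where
  "DY_row N L m z k a t i y j =
     (\<Sum>w\<in>(\<Pi>\<^sub>E l\<in>{1..m}. Sroots N L (z l)).
        w 1 ^ i * (w 1 + 1) powi (y - int i) * w m powi (- int (Suc j))
        / (\<Prod>l\<in>{2..m}. w l - w (l - 1))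
        * (\<Prod>l\<in>{1..m}. Gfun N L k a t l (w l)))"

lemma DY_eq_det_rows:
  "length Y = N \<Longrightarrow> DY N L m z k a t Y = det_rows (seq_rows (DY_row N L m z k a t) 1 Y)"
  unfolding DY_def det_rows_def
  by (rule arg_cong[where f = det], rule eq_matI) (auto simp: nth_seq_rows DY_row_def Let_def)

lemma Sroots_nonzero:
  assumes "w \<in> Sroots N L z" "z \<noteq> 0" "0 < N" "N < L"
  shows "w \<noteq> 0" "w + 1 \<noteq> 0"
  using assms by (auto simp: Sroots_def power_0_left)

lemma PiE_Sroots_nonzero:
  assumes "w \<in> (\<Pi>\<^sub>E l\<in>{1..m}. Sroots N L (z l))" "l \<in> {1..m}"
    "0 < N" "N < L" "\<forall>l\<in>{1..m}. z l \<noteq> 0"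
  shows "w l \<noteq> 0" "w l + 1 \<noteq> 0"
  using assms Sroots_nonzero[of "w l" N L "z l"] by (auto simp: PiE_def Pi_def)

lemma pascal_rows_DY_row:
  assumes "0 < N" "N < L" "1 \<le> m" "\<forall>l\<in>{1..m}. z l \<noteq> 0"
  shows "pascal_rows (DY_row N L m z k a t)"
proof
  fix i y j
  have pascal_summand: "w 1 ^ i * (w 1 + 1) powi (y - int i)
      = w 1 ^ i * (w 1 + 1) powi (y - 1 - int i) + w 1 ^ Suc i * (w 1 + 1) powi (y - int (Suc i))"
    if w: "w \<in> (\<Pi>\<^sub>E l\<in>{1..m}. Sroots N L (z l))" for w
  proof -
    have "w 1 + 1 \<noteq> 0"
      by (rule PiE_Sroots_nonzero(2)[OF w _ assms(1,2,4)]) (use assms(3) in auto)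
    then have "(w 1 + 1) powi (y - int i) = (w 1 + 1) powi (y - 1 - int i) * (w 1 + 1)"
      by (simp flip: power_int_add_1)
    then show ?thesis
      by (simp add: algebra_simps)
  qed
  show "DY_row N L m z k a t i y j = DY_row N L m z k a t i (y - 1) j + DY_row N L m z k a t (Suc i) y j"
    unfolding DY_row_def sum.distrib[symmetric]
    by (intro sum.cong refl) (simp only: pascal_summand distrib_right add_divide_distrib)
qed

lemma Gfun_succ_k:
  assumes "0 < l" "w \<noteq> 0" "w + 1 \<noteq> 0"
  shows "Gfun N L (\<lambda>l. k l + 1) a t l w = Gfun N L k a t l w * (if l = 1 then (w + 1) / w else 1)"
proof -
  define F where "F K A T = w powi (- K) * (w + 1) powi (- A + K) * exp (complex_of_real T * w)"
    for K A :: int and T :: real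
  have F_succ: "F (K + 1) A T = F K A T * ((w + 1) / w)" for K A T
  proof -
    have "w powi (- (K + 1)) = w powi (- K) / w"
      using power_int_diff[of w "- K" 1] assms by simp
    moreover have "(w + 1) powi (- A + (K + 1)) = (w + 1) powi (- A + K) * (w + 1)"
      using power_int_add_1[of "w + 1" "- A + K"] assms by (simp add: add_ac)
    ultimately show ?thesis
      by (simp add: F_def)
  qed
  have F_nonzero: "F K A T \<noteq> 0" for K A T
    using assms by (simp add: F_def)
  have Gfun_F: "Gfun N L k' a t l w = w * (w + 1) / (of_nat L * (w + of_nat N / of_nat L))
      * F (ext0 k' l) (ext0 a l) (ext0 t l) / F (ext0 k' (l - 1)) (ext0 a (l - 1)) (ext0 t (l - 1))"
    for k'
    by (simp add: Gfun_def Let_def F_def)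
  have ext0_succ: "ext0 (\<lambda>l. k l + 1) i = (if i = 0 then 0 else ext0 k i + 1)" for i
    by (simp add: ext0_def)
  show ?thesis
    using assms(1) F_nonzero unfolding Gfun_F ext0_succ by (auto simp: F_succ ext0_def[of _ 0] mult_ac)
qed

lemma prod_Gfun_succ_k:
  assumes "w \<in> (\<Pi>\<^sub>E l\<in>{1..m}. Sroots N L (z l))" "1 \<le> m"
    "0 < N" "N < L" "\<forall>l\<in>{1..m}. z l \<noteq> 0"
  shows "(\<Prod>l\<in>{1..m}. Gfun N L (\<lambda>l. k l + 1) a t l (w l))
       = (\<Prod>l\<in>{1..m}. Gfun N L k a t l (w l)) * ((w 1 + 1) / w 1)"
proof -
  have "(\<Prod>l\<in>{1..m}. Gfun N L (\<lambda>l. k l + 1) a t l (w l))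
      = (\<Prod>l\<in>{1..m}. Gfun N L k a t l (w l) * (if l = 1 then (w l + 1) / w l else 1))"
    using PiE_Sroots_nonzero[OF assms(1) _ assms(3-5)] by (intro prod.cong) (auto simp: Gfun_succ_k)
  also have "\<dots> = (\<Prod>l\<in>{1..m}. Gfun N L k a t l (w l)) * ((w 1 + 1) / w 1)"
    using assms(2) by (simp add: prod.distrib prod.delta)
  finally show ?thesis .
qed

lemma DY_row_succ_k:
  assumes "0 < N" "N < L" "1 \<le> m" "\<forall>l\<in>{1..m}. z l \<noteq> 0"
  shows "DY_row N L m z (\<lambda>l. k l + 1) a t (Suc i) = DY_row N L m z k a t i"
proof (intro ext)
  fix y j
  have summand: "w 1 ^ Suc i * (w 1 + 1) powi (y - int (Suc i)) * X / D
        * (\<Prod>l = 1..m. Gfun N L (\<lambda>l. k l + 1) a t l (w l))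
      = w 1 ^ i * (w 1 + 1) powi (y - int i) * X / D * (\<Prod>l = 1..m. Gfun N L k a t l (w l))"
    if w: "w \<in> (\<Pi>\<^sub>E l\<in>{1..m}. Sroots N L (z l))" for w X D
  proof -
    have "w 1 \<noteq> 0" "w 1 + 1 \<noteq> 0"
      using PiE_Sroots_nonzero[OF w _ assms(1,2,4)] assms(3) by auto
    then have shift: "w 1 ^ Suc i * (w 1 + 1) powi (y - int (Suc i)) * ((w 1 + 1) / w 1)
        = w 1 ^ i * (w 1 + 1) powi (y - int i)"
      using power_int_add_1[of "w 1 + 1" "y - int (Suc i)"] by simp
    show ?thesis
      unfolding prod_Gfun_succ_k[OF w assms(3,1,2,4)] shift[symmetric] by (simp add: ac_simps)
  qed
  show "DY_row N L m z (\<lambda>l. k l + 1) a t (Suc i) y j = DY_row N L m z k a t i y j"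
    unfolding DY_row_def by (intro sum.cong refl) (simp only: summand)
qed

lemma DY_row_wrap:
  assumes "0 < N" "N < L" "1 \<le> m" "\<forall>l\<in>{1..m}. z l \<noteq> 0"
  shows "DY_row N L m z k a t 0 (- int L) j = z 1 powi (- int L) * DY_row N L m z k a t N 0 j"
  unfolding DY_row_def sum_distrib_left
proof (rule sum.cong[OF refl])
  fix w assume w: "w \<in> (\<Pi>\<^sub>E l\<in>{1..m}. Sroots N L (z l))"
  have "w 1 \<noteq> 0" "w 1 + 1 \<noteq> 0"
    using PiE_Sroots_nonzero[OF w _ assms(1,2,4)] assms(3) by auto
  moreover have "z 1 ^ L = w 1 ^ N * (w 1 + 1) ^ (L - N)"
    using w assms(3) by (auto simp: Sroots_def PiE_def Pi_def)
  moreover have "(w 1 + 1) ^ L = (w 1 + 1) ^ N * (w 1 + 1) ^ (L - N)"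
    using assms(2) by (simp flip: power_add)
  ultimately have "(w 1 + 1) powi (- int L) = z 1 powi (- int L) * (w 1 ^ N * (w 1 + 1) powi (- int N))"
    by (simp add: power_int_minus field_simps)
  then show "w 1 ^ 0 * (w 1 + 1) powi (- int L - int 0) * w m powi - int (Suc j)
        / (\<Prod>l = 2..m. w l - w (l - 1)) * (\<Prod>l = 1..m. Gfun N L k a t l (w l))
      = z 1 powi - int L * (w 1 ^ N * (w 1 + 1) powi (0 - int N) * w m powi - int (Suc j)
        / (\<Prod>l = 2..m. w l - w (l - 1)) * (\<Prod>l = 1..m. Gfun N L k a t l (w l)))"
    by simp
qed

theorem lemma11p7:
  fixes N L m :: nat and z :: "nat \<Rightarrow> complex" and k a :: "nat \<Rightarrow> int" and t :: "nat \<Rightarrow> real"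
  assumes "1 \<le> N" and "N < L" and "1 \<le> m"
    and "\<forall>l\<in>{1..m}. t l \<ge> 0"
    and "\<forall>l\<in>{1..m}. z l \<noteq> 0"
    and "0 < norm (z m)"
    and "\<forall>l\<in>{1..<m}. norm (z (l + 1)) < norm (z l)"
  shows "(\<Sum>Y\<in>YN N L. DY N L m z k a t Y)
         = DY N L m z (\<lambda>l. k l + 1) a t (Ystep N)
           - (-1) ^ (N - 1) * z 1 powi (- int L) * DY N L m z k a t (Ystep N)"
proof -
  have hyps: "0 < N" "N < L" "1 \<le> m" "\<forall>l\<in>{1..m}. z l \<noteq> 0"
    using assms by auto
  define R where "R = DY_row N L m z k a t"
  interpret pascal_rows R
    unfolding R_def by (rule pascal_rows_DY_row[OF hyps])
  obtain n where n: "N = Suc n"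
    using hyps(1) by (cases N) auto
  have "(\<Sum>Y\<in>YN N L. DY N L m z k a t Y) = (\<Sum>Y\<in>strict_seqs (Suc n) (1 - int L) 0. det_rows (seq_rows R 1 Y))"
    by (rule sum.cong) (auto simp: YN_def strict_seqs_def n R_def DY_eq_det_rows)
  also have "\<dots> = det_rows (diag_rows R 0 (1 - int N) N)
      - (-1) ^ n * z 1 powi (- int L) * det_rows (diag_rows R 1 (1 - int N) N)"
    using sum_det_seq_rows[of "1 - int L" 0 n "z 1 powi (- int L)"] DY_row_wrap[OF hyps] hyps(2)
    by (simp add: R_def n)
  also have "det_rows (diag_rows R 0 (1 - int N) N) = DY N L m z (\<lambda>l. k l + 1) a t (Ystep N)"
    using diag_rows_Suc_index[of "DY_row N L m z (\<lambda>l. k l + 1) a t" 0]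
    by (simp add: DY_eq_det_rows seq_rows_Ystep DY_row_succ_k[OF hyps] R_def)
  also have "det_rows (diag_rows R 1 (1 - int N) N) = DY N L m z k a t (Ystep N)"
    by (simp add: DY_eq_det_rows seq_rows_Ystep R_def)
  finally show ?thesis
    by (simp add: n)
qed

end
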